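(* Let $q$ be a prime power and let $N, T, n$ be positive integers. Let $\boldsymbol{\mathcal{X}} \subseteq (\mathbb{F}_q^{N\times T})^n$ be an $n$-shot matrix code, and let $\rho,\tau$ be nonnegative integers. If $d_{\mathrm{S}}(\langle \boldsymbol{\mathcal{X}}\rangle) > 2(2\tau+\rho)$, then $\boldsymbol{\mathcal{X}}$ is $(\rho,\tau)$-correcting.
   Context: An $n$-shot matrix code is a non-empty subset $\boldsymbol{\mathcal{X}}\subseteq(\mathbb{F}_q^{N\times T})^n$. The channel is used $n$ times: on input $(\mathbf{X}_0,\ldots,\mathbf{X}_{n-1})\in\boldsymbol{\mathcal{X}}$ the output is $(\mathbf{Y}_0,\ldots,\mathbf{Y}_{n-1})$ with $\mathbf{Y}_j=\mathbf{A}_j\mathbf{X}_j+\mathbf{Z}_j$, where $\mathbf{A}_j\in\mathbb{F}_q^{N\times N}$ and $\mathbf{Z}_j\in\mathbb{F}_q^{N\times T}$ are arbitrary subject to $\sum_{j=0}^{n-1}(N-\operatorname{rank}\mathbf{A}_j)\le\rho$ and $\sum_{j=0}^{n-1}\operatorname{rank}\mathbf{Z}_j\le\tau$. The code is called $(\rho,\tau)$-correcting if the transmitted codeword $(\mathbf{X}_0,\ldots,\mathbf{X}_{n-1})$ can be unambiguously determined from $(\mathbf{Y}_0,\ldots,\mathbf{Y}_{n-1})$ for all such choices of $(\mathbf{A}_j)$ and $(\mathbf{Z}_j)$, i.e., no two distinct codewords can produce the same output. For a matrix $\mathbf{X}$, $\langle\mathbf{X}\rangle$ denotes the row space of $\mathbf{X}$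 (a subspace of $\mathbb{F}_q^T$). For subspaces $U,V$, the subspace distance is $d_{\mathrm{S}}(U,V)=\dim(U+V)-\dim(U\cap V)$; for $n$-tuples of subspaces $\boldsymbol{U}=(U_0,\dots,U_{n-1})$, $\boldsymbol{V}=(V_0,\dots,V_{n-1})$ the extended subspace distance is $d_{\mathrm{S}}(\boldsymbol{U},\boldsymbol{V})=\sum_{j=0}^{n-1}d_{\mathrm{S}}(U_j,V_j)$. For a codeword $\boldsymbol{X}=(\mathbf{X}_0,\dots,\mathbf{X}_{n-1})$, $\langle\boldsymbol{X}\rangle=(\langle\mathbf{X}_0\rangle,\dots,\langle\mathbf{X}_{n-1}\rangle)$, and $\langle\boldsymbol{\mathcal{X}}\rangle$ is the multiset/collection $\{\langle\boldsymbol{X}\rangle:\boldsymbol{X}\in\boldsymbol{\mathcal{X}}\}$; $d_{\mathrm{S}}(\langle\boldsymbol{\mathcal{X}}\rangle)$ is the minimum of $d_{\mathrm{S}}(\langle\boldsymbol{X}\rangle,\langle\boldsymbol{X}'\rangle)$ over distinct codewords $\boldsymbol{X}\neq\boldsymbol{X}'$ in $\boldsymbol{\mathcal{X}}$. *)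

theory Defs
  imports "HOL-Analysis.Analysis"
begin

text \<open>Fq is modelled by a finite field type 'a (every finite field has prime power order q).
  Matrices in Fq^(N x T) are elements of 'a^'t^'nn (rows indexed by 'nn, columns by 't).
  The n shots are indexed by a finite type 's, so an n-tuple of matrices is a function 's => matrix.\<close>

definition row_space :: "'a::field^'t^'nn \<Rightarrow> ('a^'t) set" where
  "row_space X = vec.span (rows X)"

definition subspace_dist :: "('a::field^'t) set \<Rightarrow> ('a^'t) set \<Rightarrow> nat" where
  "subspace_dist U V = vec.dim {u + v | u v. u \<in> U \<and> v \<in> V} - vec.dim (U \<inter> V)"

definition ext_subspace_dist ::
  "('s::finite \<Rightarrow> ('a::field^'t) set) \<Rightarrow> ('s \<Rightarrow> ('a^'t) set) \<Rightarrow> nat" where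
  "ext_subspace_dist U V = (\<Sum>j\<in>UNIV. subspace_dist (U j) (V j))"

definition code_row_spaces :: "('s::finite \<Rightarrow> 'a::field^'t^'nn) \<Rightarrow> ('s \<Rightarrow> ('a^'t) set)" where
  "code_row_spaces X = (\<lambda>j. row_space (X j))"

definition admissible ::
  "nat \<Rightarrow> nat \<Rightarrow> ('s::finite \<Rightarrow> 'a::field^'nn^'nn) \<Rightarrow> ('s \<Rightarrow> 'a^'t^'nn) \<Rightarrow> bool" where
  "admissible \<rho> \<tau> A Z \<longleftrightarrow>
     (\<Sum>j\<in>UNIV. CARD('nn) - rank (A j)) \<le> \<rho> \<and> (\<Sum>j\<in>UNIV. rank (Z j)) \<le> \<tau>"

definition channel_output ::
  "('s::finite \<Rightarrow> 'a::field^'nn^'nn) \<Rightarrow> ('s \<Rightarrow> 'a^'t^'nn) \<Rightarrow> ('s \<Rightarrow> 'a^'t^'nn) \<Rightarrow> ('s \<Rightarrow> 'a^'t^'nn)" where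
  "channel_output A Z X = (\<lambda>j. A j ** X j + Z j)"

definition correcting ::
  "nat \<Rightarrow> nat \<Rightarrow> ('s::finite \<Rightarrow> 'a::field^'t^'nn) set \<Rightarrow> bool" where
  "correcting \<rho> \<tau> C \<longleftrightarrow>
     (\<forall>X\<in>C. \<forall>X'\<in>C. \<forall>(A::'s \<Rightarrow> 'a^'nn^'nn) Z A' Z'.
        admissible \<rho> \<tau> A Z \<and> admissible \<rho> \<tau> A' Z' \<and>
        channel_output A Z X = channel_output A' Z' X' \<longrightarrow> X = X')"

end

theory Submission
  imports Defs
begin

text \<open>Fix one shot and two codewords X, X' producing the same output, i.e.
  A X + Z = A' X' + Z'. Since \<open>\<langle>A X\<rangle> \<subseteq> \<langle>X\<rangle>\<close> and, by Sylvester's rank inequality,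
  \<open>\<langle>A X\<rangle>\<close> has codimension at most N - rank A in \<open>\<langle>X\<rangle>\<close>, passing from \<open>\<langle>X\<rangle>, \<langle>X'\<rangle>\<close> to
  \<open>\<langle>A X\<rangle>, \<langle>A' X'\<rangle>\<close> changes the subspace distance by at most the two rank deficiencies.
  The rows of A X lie in the span of the rows of A' X', Z and Z', so
  \<open>d\<^sub>S(\<langle>A X\<rangle>, \<langle>A' X'\<rangle>) \<le> 2 (rank Z + rank Z')\<close>. Summing over the shots bounds the extended
  subspace distance of the two codewords by \<open>2 (2\<tau> + \<rho>)\<close>, so they must coincide.\<close>

lemma dim_Un_le:
  fixes S T :: "('a::field^'n) set"
  shows "vec.dim (S \<union> T) \<le> vec.dim S + vec.dim T"
proof -
  have "vec.dim (S \<union> T) = vec.dim {x + y |x y. x \<in> vec.span S \<and> y \<in> vec.span T}"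
    by (simp flip: vec.span_Un)
  also have "\<dots> \<le> vec.dim (vec.span S) + vec.dim (vec.span T)"
    using vec.dim_sums_Int[OF vec.subspace_span vec.subspace_span, of S T] by linarith
  finally show ?thesis by simp
qed

lemma dim_range_matrix_vector_mult_le:
  fixes M :: "'a::field^'n^'m"
  assumes "vec.subspace R"
  shows "vec.dim (range ((*v) M)) \<le> vec.dim ((*v) M ` R) + (CARD('n) - vec.dim R)"
proof -
  obtain B where B: "B \<subseteq> R" "vec.independent B" "R \<subseteq> vec.span B" "card B = vec.dim R"
    using vec.basis_exists by blast
  obtain C where C: "B \<subseteq> C" "vec.independent C" "UNIV \<subseteq> vec.span C"
    using vec.maximal_independent_subset_extend[OF subset_UNIV B(2)] by metis
  have "finite C"
    using C(2) vec.finiteI_independent by blast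
  have card_C: "card C = CARD('n)"
    using vec.dim_span_eq_card_independent[OF C(2)] C(3) vec_dim_card by (metis top.extremum_unique)
  have "(*v) M ` C = (*v) M ` B \<union> (*v) M ` (C - B)"
    using C(1) by blast
  then have "range ((*v) M) = vec.span ((*v) M ` B \<union> (*v) M ` (C - B))"
    using vec.span_image[of M C] C(3) by (simp add: top.extremum_unique)
  then have "vec.dim (range ((*v) M)) = vec.dim ((*v) M ` B \<union> (*v) M ` (C - B))"
    using vec.dim_span by metis
  also have "\<dots> \<le> vec.dim ((*v) M ` B) + vec.dim ((*v) M ` (C - B))"
    by (rule dim_Un_le)
  also have "vec.dim ((*v) M ` B) \<le> vec.dim ((*v) M ` R)"
    using B(1) by (intro vec.dim_subset image_mono)
  also have "vec.dim ((*v) M ` (C - B)) \<le> vec.dim (C - B)"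
    by (rule vec.dim_image_le) simp
  also have "vec.dim (C - B) = card C - card B"
    using C(1,2) \<open>finite C\<close>
    by (simp add: card_Diff_subset finite_subset vec.dim_eq_card_independent vec.independent_mono)
  finally show ?thesis
    using B(4) card_C by simp
qed

lemma row_space_eq_range: "row_space X = range (\<lambda>v. v v* X)"
proof -
  have axis_mult: "axis i 1 v* X = X $ i" for i
  proof -
    have "(\<Sum>k\<in>UNIV. (if k = i then 1 else 0) * X $ k $ j) = X $ i $ j" for j
      by (simp add: if_distrib[of "\<lambda>c. c * _"] cong: if_cong)
    then show ?thesis
      by (simp add: vec_eq_iff vector_matrix_mult_def axis_def)
  qed
  have "rows X = range (\<lambda>i. X $ i)"
    by (auto simp: rows_def row_def vec_lambda_eta)
  also have "\<dots> = (\<lambda>v. v v* X) ` range (\<lambda>i. axis i 1)"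
    by (simp add: image_image axis_mult)
  also have "range (\<lambda>i. axis i 1) = cart_basis"
    by (auto simp: cart_basis_def)
  finally show ?thesis
    unfolding row_space_def using vec.span_image[of "transpose X" cart_basis] by simp
qed

lemma row_space_matrix_mult: "row_space (A ** X) = (\<lambda>v. v v* X) ` vec.span (rows A)"
proof -
  have "(A ** X) $ i = (A $ i) v* X" for i
    by (simp add: vec_eq_iff matrix_matrix_mult_def vector_matrix_mult_def mult.commute)
  then have "rows (A ** X) = (\<lambda>v. v v* X) ` rows A"
    by (auto simp: rows_def row_def vec_lambda_eta image_iff)
  then show ?thesis
    unfolding row_space_def using vec.span_image[of "transpose X" "rows A"] by simp
qed

lemma dim_row_space: "vec.dim (row_space X) = rank X"
  by (simp add: row_space_def row_rank_def_gen)

lemma rank_le_card: "rank (A :: 'a::field^'n^'m) \<le> CARD('n)"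
  unfolding row_rank_def_gen using vec.dim_subset_UNIV[of "rows A"]
  by (simp add: vec.dimension_def card_cart_basis)

theorem sylvester_rank_inequality:
  fixes A :: "'a::field^'n^'m" and X :: "'a^'t^'n"
  shows "rank A + rank X \<le> rank (A ** X) + CARD('n)"
proof -
  have "rank X = vec.dim (range ((*v) (transpose X)))"
    by (simp flip: dim_row_space add: row_space_eq_range)
  also have "\<dots> \<le> vec.dim ((*v) (transpose X) ` vec.span (rows A)) + (CARD('n) - rank A)"
    using dim_range_matrix_vector_mult_le[OF vec.subspace_span, of "transpose X" "rows A"]
    by (simp add: row_rank_def_gen)
  also have "vec.dim ((*v) (transpose X) ` vec.span (rows A)) = rank (A ** X)"
    by (simp flip: dim_row_space add: row_space_matrix_mult)
  finally show ?thesis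
    using rank_le_card[of A] by linarith
qed

lemma row_space_matrix_mult_subset: "row_space (A ** X) \<subseteq> row_space X"
  using row_space_matrix_mult[of A X] row_space_eq_range[of X] by blast

lemma subspace_row_space: "vec.subspace (row_space X)"
  by (simp add: row_space_def)

lemma subspace_dist_add_dim_Int:
  assumes "vec.subspace U" "vec.subspace V"
  shows "subspace_dist U V + 2 * vec.dim (U \<inter> V) = vec.dim U + vec.dim V"
proof -
  have "vec.dim (U \<inter> V) \<le> vec.dim {u + v |u v. u \<in> U \<and> v \<in> V}"
    using assms by (intro vec.dim_subset) (force dest: vec.subspace_0)
  then show ?thesis
    using vec.dim_sums_Int[OF assms] by (simp add: subspace_dist_def)
qed

lemma subspace_dist_add_dims:
  assumes "vec.subspace U" "vec.subspace V"
  shows "subspace_dist U V + vec.dim U + vec.dim V = 2 * vec.dim (vec.span (U \<union> V))"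
proof -
  have "vec.span U = U" "vec.span V = V"
    using assms by (simp_all add: vec.span_eq_iff)
  then have "vec.span (U \<union> V) = {u + v |u v. u \<in> U \<and> v \<in> V}"
    by (simp only: vec.span_Un)
  then show ?thesis
    using vec.dim_sums_Int[OF assms] subspace_dist_add_dim_Int[OF assms]
    by (simp add: subspace_dist_def)
qed

lemma subspace_dist_le_of_subspaces:
  assumes "vec.subspace U" "vec.subspace V" "vec.subspace U'" "vec.subspace V'"
    and "U' \<subseteq> U" "V' \<subseteq> V"
  shows "subspace_dist U V + vec.dim U' + vec.dim V' \<le> subspace_dist U' V' + vec.dim U + vec.dim V"
proof -
  have "vec.dim (U' \<inter> V') \<le> vec.dim (U \<inter> V)"
    using assms(5,6) by (intro vec.dim_subset) blast
  then show ?thesis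
    using subspace_dist_add_dim_Int[OF assms(1,2)] subspace_dist_add_dim_Int[OF assms(3,4)]
    by linarith
qed

lemma subspace_dist_le_twice:
  assumes "vec.subspace U" "vec.subspace V"
    and "vec.dim (vec.span (U \<union> V)) \<le> vec.dim U + k" "vec.dim (vec.span (U \<union> V)) \<le> vec.dim V + k"
  shows "subspace_dist U V \<le> 2 * k"
  using subspace_dist_add_dims[OF assms(1,2)] assms(3,4) by linarith

lemma rows_subset_span_of_add_eq:
  fixes M M' Z Z' :: "'a::field^'t^'n"
  assumes "M + Z = M' + Z'"
  shows "rows M \<subseteq> vec.span (rows M' \<union> rows Z \<union> rows Z')"
proof
  fix r
  assume "r \<in> rows M"
  then obtain i where "r = M $ i"
    by (auto simp: rows_def row_def vec_lambda_eta)
  then have "r = M' $ i + Z' $ i - Z $ i"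
    using arg_cong[OF assms, of "\<lambda>N. N $ i"] by (simp add: algebra_simps)
  moreover have "M' $ i \<in> rows M'" "Z $ i \<in> rows Z" "Z' $ i \<in> rows Z'"
    by (auto simp: rows_def row_def vec_lambda_eta)
  ultimately show "r \<in> vec.span (rows M' \<union> rows Z \<union> rows Z')"
    by (metis UnCI vec.span_add vec.span_base vec.span_diff)
qed

lemma subspace_dist_row_space_le_of_add_eq:
  fixes M M' Z Z' :: "'a::field^'t^'n"
  assumes "M + Z = M' + Z'"
  shows "subspace_dist (row_space M) (row_space M') \<le> 2 * (rank Z + rank Z')"
proof -
  have span_bound: "vec.dim (vec.span (row_space M \<union> row_space M')) \<le> rank M' + (rank Z + rank Z')"
    if "M + Z = M' + Z'" for M M' Z Z' :: "'a^'t^'n"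
  proof -
    let ?W = "rows M' \<union> rows Z \<union> rows Z'"
    have "row_space M \<subseteq> vec.span ?W"
      unfolding row_space_def
      by (rule vec.span_minimal[OF rows_subset_span_of_add_eq[OF that] vec.subspace_span])
    moreover have "row_space M' \<subseteq> vec.span ?W"
      unfolding row_space_def by (intro vec.span_mono) blast
    ultimately have "vec.span (row_space M \<union> row_space M') \<subseteq> vec.span ?W"
      by (intro vec.span_minimal) simp_all
    then have "vec.dim (vec.span (row_space M \<union> row_space M')) \<le> vec.dim ?W"
      by (rule vec.dim_mono)
    also have "\<dots> \<le> rank M' + (rank Z + rank Z')"
      using dim_Un_le[of "rows M' \<union> rows Z" "rows Z'"] dim_Un_le[of "rows M'" "rows Z"]
      by (simp add: row_rank_def_gen)
    finally show ?thesis .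
  qed
  show ?thesis
    using span_bound[OF assms] span_bound[OF assms[symmetric]]
    by (intro subspace_dist_le_twice subspace_row_space) (simp_all add: dim_row_space Un_commute)
qed

lemma subspace_dist_row_space_le_of_output_eq:
  fixes X X' Z Z' :: "'a::field^'t^'n" and A A' :: "'a^'n^'n"
  assumes "A ** X + Z = A' ** X' + Z'"
  shows "subspace_dist (row_space X) (row_space X')
    \<le> (CARD('n) - rank A) + (CARD('n) - rank A') + 2 * (rank Z + rank Z')"
proof -
  have "subspace_dist (row_space X) (row_space X') + rank (A ** X) + rank (A' ** X')
      \<le> subspace_dist (row_space (A ** X)) (row_space (A' ** X')) + rank X + rank X'"
    using subspace_dist_le_of_subspaces[OF subspace_row_space subspace_row_space
        subspace_row_space subspace_row_space row_space_matrix_mult_subset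
        row_space_matrix_mult_subset]
    by (simp add: dim_row_space)
  moreover have "subspace_dist (row_space (A ** X)) (row_space (A' ** X')) \<le> 2 * (rank Z + rank Z')"
    using subspace_dist_row_space_le_of_add_eq[OF assms] .
  ultimately show ?thesis
    using sylvester_rank_inequality[of A X] sylvester_rank_inequality[of A' X'] by linarith
qed

lemma ext_subspace_dist_le_of_output_eq:
  fixes X X' :: "'s::finite \<Rightarrow> 'a::field^'t^'nn"
  assumes "admissible \<rho> \<tau> A Z" "admissible \<rho> \<tau> A' Z'"
    and "channel_output A Z X = channel_output A' Z' X'"
  shows "ext_subspace_dist (code_row_spaces X) (code_row_spaces X') \<le> 2 * (2 * \<tau> + \<rho>)"
proof -
  have "A j ** X j + Z j = A' j ** X' j + Z' j" for j
    using assms(3) unfolding channel_output_def by meson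
  then have "ext_subspace_dist (code_row_spaces X) (code_row_spaces X')
      \<le> (\<Sum>j\<in>UNIV. (CARD('nn) - rank (A j)) + (CARD('nn) - rank (A' j))
                    + 2 * (rank (Z j) + rank (Z' j)))"
    unfolding ext_subspace_dist_def code_row_spaces_def
    by (intro sum_mono subspace_dist_row_space_le_of_output_eq)
  also have "\<dots> = (\<Sum>j\<in>UNIV. CARD('nn) - rank (A j)) + (\<Sum>j\<in>UNIV. CARD('nn) - rank (A' j))
      + 2 * ((\<Sum>j\<in>UNIV. rank (Z j)) + (\<Sum>j\<in>UNIV. rank (Z' j)))"
    by (simp add: sum.distrib sum_distrib_left)
  also have "\<dots> \<le> 2 * (2 * \<tau> + \<rho>)"
    using assms(1,2) unfolding admissible_def by auto
  finally show ?thesis .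
qed

theorem mainTheorem1:
  fixes C :: "('s::finite \<Rightarrow> 'a::{field,finite}^'t^'nn) set"
    and \<rho> \<tau> :: nat
  assumes "C \<noteq> {}"
    and "\<forall>X\<in>C. \<forall>X'\<in>C. X \<noteq> X' \<longrightarrow>
           ext_subspace_dist (code_row_spaces X) (code_row_spaces X') > 2 * (2 * \<tau> + \<rho>)"
  shows "correcting \<rho> \<tau> C"
  unfolding correcting_def
proof (intro ballI allI impI)
  fix X X' A Z A' Z'
  assume "X \<in> C" "X' \<in> C"
    and "admissible \<rho> \<tau> A Z \<and> admissible \<rho> \<tau> A' Z' \<and> channel_output A Z X = channel_output A' Z' X'"
  then have "ext_subspace_dist (code_row_spaces X) (code_row_spaces X') \<le> 2 * (2 * \<tau> + \<rho>)"
    using ext_subspace_dist_le_of_output_eq by blast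
  then show "X = X'"
    using assms(2) \<open>X \<in> C\<close> \<open>X' \<in> C\<close> by (meson leD)
qed

end
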